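(* Let $\xi>0$, $v_2<v_1$ with either $v_2<0<v_1$ or $0<v_2<v_1$, $q\in[0,1]$, and for $\lambda>0$ let $\tilde p(x,t)$ be the (generalized) density of the position $\tilde X(t)$ of the extended telegraph process driven by GCPs with parameter $\lambda$ with Poissonian resets to the origin at rate $\xi$, with $\tilde X(0)=0$ and random initial velocity $V_0$, $P\{V_0=v_1\}=q=1-P\{V_0=v_2\}$. Then for $t>0$ and $v_2t<x<v_1t$, $$ \lim_{\lambda\to+\infty}\tilde p(x,t)=\mathbb 1_{\{v_2t<x<v_1t\}}\frac{e^{-\xi t}}{(v_1-v_2)t}+\frac{\xi}{v_1-v_2}\boldsymbol I(x,t)\Gamma^\xi(x,t), $$ where $\Gamma^\xi(x,t)=\Gamma[0,M_x\xi,t\xi]$ if $v_2<0<v_1$ and $\Gamma^\xi(x,t)=\Gamma[0,\frac x{v_1}\xi,m_{x,t}\xi]$ if $0<v_2<v_1$.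
   Context: GCP with intensity $\lambda>0$: a Poisson process whose rate is random, exponentially distributed with mean $\lambda$; increments satisfy $P\{\tilde N_\lambda(t+s)-\tilde N_\lambda(t)=k\}=\frac{1}{1+\lambda s}(\frac{\lambda s}{1+\lambda s})^k$. The process: a particle starts at the origin with initial velocity $V(0)$ ($v_1,v_2\ne0$, $v_2<v_1$), moves with velocity alternating between $v_1$ and $v_2$, the periods at velocity $v_1$ and at $v_2$ being governed by two independent GCPs of intensity $\lambda$; additionally it is instantaneously reset to the origin at the epochs of an independent Poisson process of rate $\xi$, restarting afresh with its initial velocity. Conditional on $V(0)=v_j$, the density is $\tilde p(x,t|v_j)=e^{-\xi t}p(x,t|v_j)+\xi\int_0^te^{-\xi s}p(x,s|v_j)ds$, where $p(x,t|v_j)=\frac{\delta(x-v_jt)}{1+\lambda t}+\mathbb 1_{\{v_2t<x<v_1t\}}\frac{\lambda}{(v_1-v_2)(1+\lambda t)}$; $\tilde p(x,t)=q\tilde p(x,t|v_1)+(1-q)\tilde p(x,t|v_2)$. Notation: $M_x=\max\{x/v_1,x/v_2\}$, $m_{x,t}=\min\{x/v_2,t\}$, $\Gamma(a,z_0,z_1)=\int_{z_0}^{z_1}s^{a-1}e^{-s}ds$, $\boldsymbol I(x,t)=\mathbb 1_{\{\min\{v_2t,0\}<x<v_1t\}}$. *)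

theory Defs
  imports "HOL-Analysis.Analysis"
begin

text \<open>Absolutely continuous part of the density of the GCP-driven telegraph process
  (without resets) at time s, i.e. the indicator term of p(x,s|v_j); it does not depend on v_j.\<close>
definition p_ac :: "real \<Rightarrow> real \<Rightarrow> real \<Rightarrow> real \<Rightarrow> real \<Rightarrow> real" where
  "p_ac lam v1 v2 x s =
     (if v2 * s < x \<and> x < v1 * s then lam / ((v1 - v2) * (1 + lam * s)) else 0)"

text \<open>The contribution of the singular (Dirac) part of p(x,s|v) to the reset integral:
  the value of  \<integral>_0^t e^{-\<xi> s} \<delta>(x - v s) / (1 + lam s) ds,
  obtained from the defining property of the Dirac delta (root s = x/v, factor 1/|v|).\<close>
definition delta_int :: "real \<Rightarrow> real \<Rightarrow> real \<Rightarrow> real \<Rightarrow> real \<Rightarrow> real" where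
  "delta_int xi lam v x t =
     (if v \<noteq> 0 \<and> 0 < x / v \<and> x / v < t
      then exp (- xi * (x / v)) / (\<bar>v\<bar> * (1 + lam * (x / v))) else 0)"

text \<open>Generalized density p~(x,t|v_j) evaluated at a point x with x \<noteq> v_j t
  (so the atom e^{-\<xi> t} \<delta>(x - v_j t)/(1+lam t) contributes nothing):
  p~(x,t|v) = e^{-\<xi> t} p(x,t|v) + \<xi> \<integral>_0^t e^{-\<xi> s} p(x,s|v) ds.\<close>
definition tilde_p_cond :: "real \<Rightarrow> real \<Rightarrow> real \<Rightarrow> real \<Rightarrow> real \<Rightarrow> real \<Rightarrow> real \<Rightarrow> real" where
  "tilde_p_cond xi lam v1 v2 v x t =
     exp (- xi * t) * p_ac lam v1 v2 x t
     + xi * (integral {0..t} (\<lambda>s. exp (- xi * s) * p_ac lam v1 v2 x s) + delta_int xi lam v x t)"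

definition tilde_p :: "real \<Rightarrow> real \<Rightarrow> real \<Rightarrow> real \<Rightarrow> real \<Rightarrow> real \<Rightarrow> real \<Rightarrow> real" where
  "tilde_p xi lam q v1 v2 x t =
     q * tilde_p_cond xi lam v1 v2 v1 x t + (1 - q) * tilde_p_cond xi lam v1 v2 v2 x t"

text \<open>Incomplete gamma function \<Gamma>(a,z0,z1) = \<integral>_{z0}^{z1} s^{a-1} e^{-s} ds, as an
  extended nonnegative value (it may be +\<infinity> for a = 0, z0 = 0).\<close>
definition inc_Gamma :: "real \<Rightarrow> real \<Rightarrow> real \<Rightarrow> ennreal" where
  "inc_Gamma a z0 z1 = (\<integral>\<^sup>+ s \<in> {z0..z1}. ennreal (s powr (a - 1) * exp (- s)) \<partial>lborel)"

definition M_x :: "real \<Rightarrow> real \<Rightarrow> real \<Rightarrow> real" where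
  "M_x v1 v2 x = max (x / v1) (x / v2)"

definition m_xt :: "real \<Rightarrow> real \<Rightarrow> real \<Rightarrow> real" where
  "m_xt v2 x t = min (x / v2) t"

definition I_ind :: "real \<Rightarrow> real \<Rightarrow> real \<Rightarrow> real \<Rightarrow> real" where
  "I_ind v1 v2 x t = (if min (v2 * t) 0 < x \<and> x < v1 * t then 1 else 0)"

definition Gamma_xi :: "real \<Rightarrow> real \<Rightarrow> real \<Rightarrow> real \<Rightarrow> real \<Rightarrow> ennreal" where
  "Gamma_xi xi v1 v2 x t =
     (if v2 < 0 \<and> 0 < v1 then inc_Gamma 0 (M_x v1 v2 x * xi) (t * xi)
      else inc_Gamma 0 (x / v1 * xi) (m_xt v2 x t * xi))"

end

theory Submission
  imports Defs "HOL-Real_Asymp.Real_Asymp"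
begin

(* As lam tends to infinity the velocity switches infinitely often: the atoms
   delta(x - v s)/(1 + lam s) vanish, while the absolutely continuous part
   lam/((v1 - v2)(1 + lam s)) increases to the uniform density 1/((v1 - v2) s) on (v2 s, v1 s).
   Monotone convergence passes the limit through the reset integral, and the substitution
   u = xi s turns the integral of e^(-xi s)/s over the times s <= t with v2 s < x < v1 s
   into an incomplete gamma function; that set of times is an interval whose endpoints
   depend on the signs of the velocities. *)

lemma tendsto_nn_integral_at_top_mono:
  fixes f :: "real \<Rightarrow> 'a \<Rightarrow> ennreal"
  assumes meas: "\<And>l. f l \<in> borel_measurable M"
    and mono: "\<And>l m x. 0 \<le> l \<Longrightarrow> l \<le> m \<Longrightarrow> f l x \<le> f m x"
    and lim: "\<And>x. ((\<lambda>l. f l x) \<longlongrightarrow> g x) at_top"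
  shows "((\<lambda>l. \<integral>\<^sup>+x. f l x \<partial>M) \<longlongrightarrow> (\<integral>\<^sup>+x. g x \<partial>M)) at_top"
proof (rule increasing_tendsto)
  have integral_mono: "(\<integral>\<^sup>+x. f l x \<partial>M) \<le> (\<integral>\<^sup>+x. f m x \<partial>M)" if "0 \<le> l" "l \<le> m" for l m
    using mono[OF that] by (rule nn_integral_mono)
  have le_limit: "f l x \<le> g x" if "0 \<le> l" for l x
  proof (rule tendsto_lowerbound[OF lim])
    show "\<forall>\<^sub>F m in at_top. f l x \<le> f m x"
      using eventually_ge_at_top[of l] by eventually_elim (rule mono[OF that])
  qed simp
  show "\<forall>\<^sub>F l in at_top. (\<integral>\<^sup>+x. f l x \<partial>M) \<le> (\<integral>\<^sup>+x. g x \<partial>M)"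
    using eventually_ge_at_top[of 0] by eventually_elim (intro nn_integral_mono le_limit)
  have limit_SUP: "g x = (SUP n. f (real n) x)" for x
  proof -
    have "incseq (\<lambda>n. f (real n) x)"
      by (rule incseq_SucI) (simp add: mono)
    moreover have "(\<lambda>n. f (real n) x) \<longlonglongrightarrow> g x"
      using lim filterlim_real_sequentially by (rule filterlim_compose)
    ultimately show ?thesis
      using LIMSEQ_SUP LIMSEQ_unique by blast
  qed
  have integral_limit_SUP: "(\<integral>\<^sup>+x. g x \<partial>M) = (SUP n. \<integral>\<^sup>+x. f (real n) x \<partial>M)"
    unfolding limit_SUP
    by (rule nn_integral_monotone_convergence_SUP) (auto intro!: incseq_SucI le_funI mono simp: meas)
  fix y assume "y < (\<integral>\<^sup>+x. g x \<partial>M)"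
  then obtain n where n: "y < (\<integral>\<^sup>+x. f (real n) x \<partial>M)"
    by (auto simp: integral_limit_SUP less_SUP_iff)
  show "\<forall>\<^sub>F l in at_top. y < (\<integral>\<^sup>+x. f l x \<partial>M)"
    using eventually_ge_at_top[of "real n"]
    by eventually_elim (rule less_le_trans[OF n integral_mono], simp_all)
qed

lemma nn_set_integral_eq_interval:
  fixes W :: "real set"
  assumes "{L<..<U} \<subseteq> W" "W \<subseteq> {L..U}"
  shows "(\<integral>\<^sup>+ s\<in>W. f s \<partial>lborel) = (\<integral>\<^sup>+ s\<in>{L..U}. f s \<partial>lborel)"
proof (rule nn_integral_cong_AE)
  show "AE s in lborel. f s * indicator W s = f s * indicator {L..U} s"
    using AE_lborel_singleton[of L] AE_lborel_singleton[of U]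
    by eventually_elim (use assms in \<open>auto simp: indicator_def subset_iff\<close>)
qed

lemma inc_Gamma_scale:
  assumes "0 < c" "0 \<le> L"
  shows "inc_Gamma a (L * c) (U * c) =
    ennreal (c powr a) * (\<integral>\<^sup>+ s\<in>{L..U}. ennreal (s powr (a - 1) * exp (- c * s)) \<partial>lborel)"
proof -
  have "inc_Gamma a (L * c) (U * c) = ennreal \<bar>c\<bar> * (\<integral>\<^sup>+ s. ennreal ((0 + c * s) powr (a - 1) * exp (- (0 + c * s)))
      * indicator {L * c..U * c} (0 + c * s) \<partial>lborel)"
    unfolding inc_Gamma_def by (rule nn_integral_real_affine) (use assms in auto)
  also have "\<dots> = (\<integral>\<^sup>+ s. ennreal (c powr a) * (ennreal (s powr (a - 1) * exp (- c * s)) * indicator {L..U} s) \<partial>lborel)"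
  proof (subst nn_integral_cmult[symmetric], measurable, rule nn_integral_cong)
    fix s :: real
    show "ennreal \<bar>c\<bar> * (ennreal ((0 + c * s) powr (a - 1) * exp (- (0 + c * s))) * indicator {L * c..U * c} (0 + c * s))
        = ennreal (c powr a) * (ennreal (s powr (a - 1) * exp (- c * s)) * indicator {L..U} s)"
    proof (cases "s \<in> {L..U}")
      case True
      then have "0 \<le> s" using assms by simp
      have "c * ((c * s) powr (a - 1) * exp (- (c * s))) = c powr a * (s powr (a - 1) * exp (- c * s))"
        using assms \<open>0 \<le> s\<close> by (simp add: powr_mult powr_mult_base)
      moreover have "c * s \<in> {L * c..U * c}"
        using True assms by (simp add: mult.commute)
      ultimately show ?thesis
        using True assms \<open>0 \<le> s\<close> by (simp add: ennreal_mult[symmetric])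
    next
      case False
      then have "c * s \<notin> {L * c..U * c}"
        using assms by (simp add: mult.commute)
      then show ?thesis using False by simp
    qed
  qed
  also have "\<dots> = ennreal (c powr a) * (\<integral>\<^sup>+ s\<in>{L..U}. ennreal (s powr (a - 1) * exp (- c * s)) \<partial>lborel)"
    by (rule nn_integral_cmult) measurable
  finally show ?thesis .
qed

definition p_ac_limit :: "real \<Rightarrow> real \<Rightarrow> real \<Rightarrow> real \<Rightarrow> real" where
  "p_ac_limit v1 v2 x s = (if v2 * s < x \<and> x < v1 * s then 1 / ((v1 - v2) * s) else 0)"

lemma support_time_pos:
  fixes v1 v2 x s :: real
  assumes "v2 < v1" "v2 * s < x" "x < v1 * s"
  shows "0 < s"
proof -
  have "0 < (v1 - v2) * s" using assms by (simp add: algebra_simps)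
  then show ?thesis using assms by (simp add: zero_less_mult_iff)
qed

lemma p_ac_nonneg:
  assumes "0 \<le> lam" "v2 < v1"
  shows "0 \<le> p_ac lam v1 v2 x s"
proof (cases "v2 * s < x \<and> x < v1 * s")
  case True
  then have "0 < s" using assms support_time_pos by blast
  then show ?thesis using assms unfolding p_ac_def if_P[OF True]
    by (intro divide_nonneg_pos mult_pos_pos add_pos_nonneg) auto
next
  case False
  then show ?thesis unfolding p_ac_def if_not_P[OF False] by simp
qed

lemma p_ac_le:
  assumes "0 \<le> lam" "v2 < v1"
  shows "p_ac lam v1 v2 x s \<le> lam / (v1 - v2)"
proof (cases "v2 * s < x \<and> x < v1 * s")
  case True
  then have "0 < s" using assms support_time_pos by blast
  then have "lam / ((v1 - v2) * (1 + lam * s)) \<le> lam / ((v1 - v2) * 1)"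
    using assms by (intro divide_left_mono mult_left_mono mult_pos_pos add_pos_nonneg) auto
  then show ?thesis unfolding p_ac_def if_P[OF True] by simp
next
  case False
  then show ?thesis using assms unfolding p_ac_def if_not_P[OF False] by simp
qed

lemma p_ac_mono:
  assumes "0 \<le> lam" "lam \<le> mu" "v2 < v1"
  shows "p_ac lam v1 v2 x s \<le> p_ac mu v1 v2 x s"
proof (cases "v2 * s < x \<and> x < v1 * s")
  case True
  then have "0 < s" using assms support_time_pos by blast
  have "lam * (1 + mu * s) \<le> mu * (1 + lam * s)"
    using assms by (simp add: algebra_simps)
  then have "lam / (1 + lam * s) \<le> mu / (1 + mu * s)"
    using \<open>0 < s\<close> assms by (simp add: divide_simps add_pos_nonneg)
  then have "lam / (1 + lam * s) / (v1 - v2) \<le> mu / (1 + mu * s) / (v1 - v2)"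
    by (rule divide_right_mono) (use assms in simp)
  then show ?thesis unfolding p_ac_def if_P[OF True]
    by (metis divide_divide_eq_left mult.commute)
next
  case False
  then show ?thesis unfolding p_ac_def if_not_P[OF False] by simp
qed

lemma tendsto_p_ac:
  assumes "v2 < v1"
  shows "((\<lambda>lam. p_ac lam v1 v2 x s) \<longlongrightarrow> p_ac_limit v1 v2 x s) at_top"
proof (cases "v2 * s < x \<and> x < v1 * s")
  case True
  then have s: "0 < s" using assms support_time_pos by blast
  have "((\<lambda>lam. 1 / ((v1 - v2) * (inverse lam + s))) \<longlongrightarrow> 1 / ((v1 - v2) * (0 + s))) at_top"
    using s assms by (intro tendsto_intros tendsto_inverse_0_at_top filterlim_ident) auto
  moreover have "\<forall>\<^sub>F lam in at_top. 1 / ((v1 - v2) * (inverse lam + s)) = p_ac lam v1 v2 x s"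
    using eventually_gt_at_top[of 0] by eventually_elim (use True in \<open>simp add: p_ac_def field_simps\<close>)
  ultimately show ?thesis using True by (simp add: p_ac_limit_def tendsto_cong)
next
  case False
  then have "p_ac lam v1 v2 x s = 0" "p_ac_limit v1 v2 x s = 0" for lam
    by (auto simp: p_ac_def p_ac_limit_def)
  then show ?thesis by simp
qed

lemma delta_int_nonneg:
  assumes "0 \<le> lam"
  shows "0 \<le> delta_int xi lam v x t"
proof (cases "v \<noteq> 0 \<and> 0 < x / v \<and> x / v < t")
  case True
  define a where "a = x / v"
  have "0 < a" using True by (simp add: a_def)
  then have "0 < \<bar>v\<bar> * (1 + lam * a)"
    using True assms by (intro mult_pos_pos add_pos_nonneg) auto
  then show ?thesis unfolding delta_int_def if_P[OF True] unfolding a_def[symmetric] by simp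
next
  case False
  then show ?thesis unfolding delta_int_def if_not_P[OF False] by simp
qed

lemma tendsto_delta_int: "((\<lambda>lam. delta_int xi lam v x t) \<longlongrightarrow> 0) at_top"
proof (cases "v \<noteq> 0 \<and> 0 < x / v \<and> x / v < t")
  case True
  define a where "a = x / v"
  have "0 < a" "0 < \<bar>v\<bar>" using True by (auto simp: a_def)
  then have "filterlim (\<lambda>lam. \<bar>v\<bar> * (1 + lam * a)) at_top at_top"
    by real_asymp
  then have "((\<lambda>lam. exp (- xi * a) / (\<bar>v\<bar> * (1 + lam * a))) \<longlongrightarrow> 0) at_top"
    by (intro tendsto_divide_0[OF tendsto_const] filterlim_at_top_imp_at_infinity)
  then show ?thesis unfolding delta_int_def if_P[OF True] unfolding a_def[symmetric] .
next
  case False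
  then show ?thesis unfolding delta_int_def if_not_P[OF False] by simp
qed

lemma integrable_weighted_p_ac:
  assumes "0 \<le> lam" "v2 < v1" "0 \<le> xi"
  shows "(\<lambda>s. exp (- xi * s) * p_ac lam v1 v2 x s) integrable_on {0..t}"
proof (rule measurable_bounded_by_integrable_imp_integrable_real[where g="\<lambda>_. lam / (v1 - v2)"])
  show "(\<lambda>s. exp (- xi * s) * p_ac lam v1 v2 x s) \<in> borel_measurable (lebesgue_on {0..t})"
    unfolding p_ac_def by (intro measurable_restrict_space1 measurable_completion) measurable
  fix s assume "s \<in> {0..t}"
  then have "exp (- xi * s) * p_ac lam v1 v2 x s \<le> p_ac lam v1 v2 x s"
    using p_ac_nonneg[of lam v2 v1 x s] assms by (simp add: mult_left_le_one_le)
  then show "\<bar>exp (- xi * s) * p_ac lam v1 v2 x s\<bar> \<le> lam / (v1 - v2)"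
    using p_ac_nonneg[of lam v2 v1 x s] p_ac_le[of lam v2 v1 x s] assms by simp
qed auto

lemma nn_integral_weighted_p_ac:
  assumes "0 \<le> lam" "v2 < v1" "0 \<le> xi"
  shows "ennreal (integral {0..t} (\<lambda>s. exp (- xi * s) * p_ac lam v1 v2 x s)) =
    (\<integral>\<^sup>+ s\<in>{0..t}. ennreal (exp (- xi * s) * p_ac lam v1 v2 x s) \<partial>lborel)"
  using nn_integral_has_integral_lebesgue'[OF _ integrable_integral[OF integrable_weighted_p_ac[OF assms]]]
    p_ac_nonneg[OF assms(1,2)] by simp

lemma ennreal_tilde_p_eq:
  assumes "0 \<le> lam" "0 \<le> xi" "v2 < v1" "0 \<le> q" "q \<le> 1"
  shows "ennreal (tilde_p xi lam q v1 v2 x t) =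
      ennreal (exp (- xi * t) * p_ac lam v1 v2 x t)
      + ennreal xi * (\<integral>\<^sup>+ s\<in>{0..t}. ennreal (exp (- xi * s) * p_ac lam v1 v2 x s) \<partial>lborel)
      + ennreal (xi * (q * delta_int xi lam v1 x t + (1 - q) * delta_int xi lam v2 x t))"
proof -
  let ?J = "integral {0..t} (\<lambda>s. exp (- xi * s) * p_ac lam v1 v2 x s)"
  let ?D = "xi * (q * delta_int xi lam v1 x t + (1 - q) * delta_int xi lam v2 x t)"
  have "tilde_p xi lam q v1 v2 x t = exp (- xi * t) * p_ac lam v1 v2 x t + xi * ?J + ?D"
    by (simp add: tilde_p_def tilde_p_cond_def algebra_simps)
  moreover have "0 \<le> ?J"
    using integrable_weighted_p_ac[OF assms(1,3,2)] p_ac_nonneg[OF assms(1,3)]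
    by (intro integral_nonneg) auto
  moreover have "0 \<le> ?D"
    using delta_int_nonneg[OF assms(1)] assms by simp
  ultimately show ?thesis
    using nn_integral_weighted_p_ac[OF assms(1,3,2)] p_ac_nonneg[OF assms(1,3)] assms(2)
    by (simp add: ennreal_plus[symmetric] ennreal_mult)
qed

lemma tendsto_nn_integral_weighted_p_ac:
  assumes "v2 < v1"
  shows "((\<lambda>lam. \<integral>\<^sup>+ s\<in>{0..t}. ennreal (exp (- xi * s) * p_ac lam v1 v2 x s) \<partial>lborel)
    \<longlongrightarrow> (\<integral>\<^sup>+ s\<in>{0..t}. ennreal (exp (- xi * s) * p_ac_limit v1 v2 x s) \<partial>lborel)) at_top"
proof (rule tendsto_nn_integral_at_top_mono)
  show "(\<lambda>s. ennreal (exp (- xi * s) * p_ac lam v1 v2 x s) * indicator {0..t} s) \<in> borel_measurable lborel"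
    for lam
    unfolding p_ac_def by measurable
  show "ennreal (exp (- xi * s) * p_ac lam v1 v2 x s) * indicator {0..t} s
      \<le> ennreal (exp (- xi * s) * p_ac mu v1 v2 x s) * indicator {0..t} s"
    if "0 \<le> lam" "lam \<le> mu" for lam mu s
    using p_ac_mono[OF that assms] by (intro mult_right_mono ennreal_leI mult_left_mono) auto
  show "((\<lambda>lam. ennreal (exp (- xi * s) * p_ac lam v1 v2 x s) * indicator {0..t} s)
      \<longlongrightarrow> ennreal (exp (- xi * s) * p_ac_limit v1 v2 x s) * indicator {0..t} s) at_top" for s
    using tendsto_p_ac[OF assms] by (intro tendsto_intros) (auto simp: indicator_def)
qed

lemma tendsto_tilde_p:
  assumes "0 \<le> xi" "v2 < v1" "0 \<le> q" "q \<le> 1"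
  shows "((\<lambda>lam. ennreal (tilde_p xi lam q v1 v2 x t)) \<longlongrightarrow>
      ennreal (exp (- xi * t) * p_ac_limit v1 v2 x t)
      + ennreal xi * (\<integral>\<^sup>+ s\<in>{0..t}. ennreal (exp (- xi * s) * p_ac_limit v1 v2 x s) \<partial>lborel)) at_top"
proof -
  have "((\<lambda>lam. ennreal (exp (- xi * t) * p_ac lam v1 v2 x t))
      \<longlongrightarrow> ennreal (exp (- xi * t) * p_ac_limit v1 v2 x t)) at_top"
    using tendsto_p_ac[OF assms(2)] by (intro tendsto_ennrealI tendsto_mult tendsto_const)
  moreover have "((\<lambda>lam. ennreal xi * (\<integral>\<^sup>+ s\<in>{0..t}. ennreal (exp (- xi * s) * p_ac lam v1 v2 x s) \<partial>lborel))
      \<longlongrightarrow> ennreal xi * (\<integral>\<^sup>+ s\<in>{0..t}. ennreal (exp (- xi * s) * p_ac_limit v1 v2 x s) \<partial>lborel)) at_top"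
    using tendsto_nn_integral_weighted_p_ac[OF assms(2)] by (rule ennreal_tendsto_cmult[rotated]) simp
  moreover have "((\<lambda>lam. ennreal (xi * (q * delta_int xi lam v1 x t + (1 - q) * delta_int xi lam v2 x t)))
      \<longlongrightarrow> ennreal 0) at_top"
    using tendsto_delta_int by (intro tendsto_ennrealI) (auto intro!: tendsto_eq_intros)
  ultimately have "((\<lambda>lam. ennreal (tilde_p xi lam q v1 v2 x t)) \<longlongrightarrow>
      ennreal (exp (- xi * t) * p_ac_limit v1 v2 x t)
      + ennreal xi * (\<integral>\<^sup>+ s\<in>{0..t}. ennreal (exp (- xi * s) * p_ac_limit v1 v2 x s) \<partial>lborel)
      + ennreal 0) at_top"
    by (rule Lim_transform_eventually[OF tendsto_add[OF tendsto_add]])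
      (use eventually_ge_at_top[of 0] in \<open>eventually_elim, simp add: ennreal_tilde_p_eq assms\<close>)
  then show ?thesis by simp
qed

lemma nn_integral_p_ac_limit_eq_inc_Gamma:
  assumes "v2 < v1" "0 < xi" "0 \<le> L"
    and "{L<..<U} \<subseteq> {s \<in> {0..t}. v2 * s < x \<and> x < v1 * s}"
    and "{s \<in> {0..t}. v2 * s < x \<and> x < v1 * s} \<subseteq> {L..U}"
  shows "(\<integral>\<^sup>+ s\<in>{0..t}. ennreal (exp (- xi * s) * p_ac_limit v1 v2 x s) \<partial>lborel) =
    ennreal (1 / (v1 - v2)) * inc_Gamma 0 (L * xi) (U * xi)"
proof -
  let ?W = "{s \<in> {0..t}. v2 * s < x \<and> x < v1 * s}"
  have "(\<integral>\<^sup>+ s\<in>{0..t}. ennreal (exp (- xi * s) * p_ac_limit v1 v2 x s) \<partial>lborel) =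
      (\<integral>\<^sup>+ s. ennreal (1 / (v1 - v2)) * (ennreal (exp (- xi * s) / s) * indicator ?W s) \<partial>lborel)"
  proof (rule nn_integral_cong)
    fix s :: real
    show "ennreal (exp (- xi * s) * p_ac_limit v1 v2 x s) * indicator {0..t} s =
        ennreal (1 / (v1 - v2)) * (ennreal (exp (- xi * s) / s) * indicator ?W s)"
    proof (cases "s \<in> ?W")
      case True
      then have "0 < s" using assms(1) support_time_pos by blast
      then show ?thesis
        using True assms(1) by (simp add: p_ac_limit_def ennreal_mult[symmetric])
    next
      case False
      then show ?thesis by (auto simp: p_ac_limit_def indicator_def)
    qed
  qed
  also have "\<dots> = ennreal (1 / (v1 - v2)) * (\<integral>\<^sup>+ s\<in>?W. ennreal (exp (- xi * s) / s) \<partial>lborel)"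
    by (rule nn_integral_cmult) measurable
  also have "(\<integral>\<^sup>+ s\<in>?W. ennreal (exp (- xi * s) / s) \<partial>lborel)
      = (\<integral>\<^sup>+ s\<in>{L..U}. ennreal (exp (- xi * s) / s) \<partial>lborel)"
    using assms(4,5) by (rule nn_set_integral_eq_interval)
  also have "\<dots> = inc_Gamma 0 (L * xi) (U * xi)"
    using assms(2,3) by (auto simp: inc_Gamma_scale intro!: nn_integral_cong split: split_indicator)
  finally show ?thesis .
qed

lemma M_x_nonneg:
  fixes v1 v2 x :: real
  assumes "v2 < 0" "0 < v1"
  shows "0 \<le> M_x v1 v2 x"
proof -
  have "0 \<le> x / v1 \<or> 0 \<le> x / v2"
    using assms by (auto simp: zero_le_divide_iff)
  then show ?thesis by (auto simp: M_x_def le_max_iff_disj)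
qed

lemma support_times_straddling:
  fixes v1 v2 x t :: real
  assumes "v2 < 0" "0 < v1"
  shows "{s \<in> {0..t}. v2 * s < x \<and> x < v1 * s} = {M_x v1 v2 x<..t}"
proof -
  have "v2 * s < x \<longleftrightarrow> x / v2 < s" "x < v1 * s \<longleftrightarrow> x / v1 < s" for s
    using assms by (simp_all add: neg_divide_less_eq pos_divide_less_eq mult.commute)
  then show ?thesis
    using M_x_nonneg[OF assms, of x] by (auto simp: M_x_def)
qed

lemma support_times_same_sign:
  fixes v1 v2 x t :: real
  assumes "0 < v2" "v2 < v1" "0 < x"
  shows "{x / v1<..<m_xt v2 x t} \<subseteq> {s \<in> {0..t}. v2 * s < x \<and> x < v1 * s}"
    and "{s \<in> {0..t}. v2 * s < x \<and> x < v1 * s} \<subseteq> {x / v1..m_xt v2 x t}"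
proof -
  have "v2 * s < x \<longleftrightarrow> s < x / v2" "x < v1 * s \<longleftrightarrow> x / v1 < s" for s
    using assms by (simp_all add: pos_less_divide_eq pos_divide_less_eq mult.commute)
  moreover have "0 < x / v1" using assms by simp
  ultimately show "{x / v1<..<m_xt v2 x t} \<subseteq> {s \<in> {0..t}. v2 * s < x \<and> x < v1 * s}"
    and "{s \<in> {0..t}. v2 * s < x \<and> x < v1 * s} \<subseteq> {x / v1..m_xt v2 x t}"
    by (auto simp: m_xt_def)
qed

lemma nn_integral_p_ac_limit_eq_Gamma_xi:
  fixes xi v1 v2 x t :: real
  assumes "0 < xi" "v2 < v1" "(v2 < 0 \<and> 0 < v1) \<or> (0 < v2 \<and> v2 < v1)" "0 < t" "v2 * t < x"
  shows "(\<integral>\<^sup>+ s\<in>{0..t}. ennreal (exp (- xi * s) * p_ac_limit v1 v2 x s) \<partial>lborel) =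
    ennreal (1 / (v1 - v2)) * Gamma_xi xi v1 v2 x t"
proof (cases "v2 < 0 \<and> 0 < v1")
  case True
  then have "v2 < 0" "0 < v1" by auto
  note window = support_times_straddling[OF this, where x = x and t = t] M_x_nonneg[OF this, of x]
  have "(\<integral>\<^sup>+ s\<in>{0..t}. ennreal (exp (- xi * s) * p_ac_limit v1 v2 x s) \<partial>lborel) =
      ennreal (1 / (v1 - v2)) * inc_Gamma 0 (M_x v1 v2 x * xi) (t * xi)"
  proof (rule nn_integral_p_ac_limit_eq_inc_Gamma)
    show "{M_x v1 v2 x<..<t} \<subseteq> {s \<in> {0..t}. v2 * s < x \<and> x < v1 * s}"
      and "{s \<in> {0..t}. v2 * s < x \<and> x < v1 * s} \<subseteq> {M_x v1 v2 x..t}"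
      unfolding window(1) by auto
  qed (use assms window(2) in auto)
  then show ?thesis
    unfolding Gamma_xi_def if_P[OF True] .
next
  case False
  then have "0 < v2" "0 < x"
    using assms(3,4,5) by (auto intro: order.strict_trans[OF mult_pos_pos])
  note window = support_times_same_sign[OF \<open>0 < v2\<close> assms(2) \<open>0 < x\<close>, where t = t]
  have "(\<integral>\<^sup>+ s\<in>{0..t}. ennreal (exp (- xi * s) * p_ac_limit v1 v2 x s) \<partial>lborel) =
      ennreal (1 / (v1 - v2)) * inc_Gamma 0 (x / v1 * xi) (m_xt v2 x t * xi)"
    using \<open>0 < v2\<close> \<open>0 < x\<close> assms(1,2) window by (intro nn_integral_p_ac_limit_eq_inc_Gamma) auto
  then show ?thesis
    unfolding Gamma_xi_def if_not_P[OF False] .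
qed

theorem corollary4:
  fixes xi v1 v2 q x t :: real
  assumes "xi > 0" and "v2 < v1"
    and "(v2 < 0 \<and> 0 < v1) \<or> (0 < v2 \<and> v2 < v1)"
    and "0 \<le> q" and "q \<le> 1"
    and "t > 0" and "v2 * t < x" and "x < v1 * t"
  shows "((\<lambda>lam. ennreal (tilde_p xi lam q v1 v2 x t)) \<longlongrightarrow>
           ennreal ((if v2 * t < x \<and> x < v1 * t then 1 else 0) * exp (- xi * t) / ((v1 - v2) * t))
           + ennreal (xi / (v1 - v2) * I_ind v1 v2 x t) * Gamma_xi xi v1 v2 x t) at_top"
proof -
  have "I_ind v1 v2 x t = 1"
    using assms(7,8) by (simp add: I_ind_def)
  then have reset_part: "ennreal xi *
      (\<integral>\<^sup>+ s\<in>{0..t}. ennreal (exp (- xi * s) * p_ac_limit v1 v2 x s) \<partial>lborel) =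
      ennreal (xi / (v1 - v2) * I_ind v1 v2 x t) * Gamma_xi xi v1 v2 x t"
    using nn_integral_p_ac_limit_eq_Gamma_xi[OF assms(1-3,6,7)] assms(1,2)
    by (simp add: ennreal_mult[symmetric] mult.assoc[symmetric])
  have survival_part: "exp (- xi * t) * p_ac_limit v1 v2 x t =
      (if v2 * t < x \<and> x < v1 * t then 1 else 0) * exp (- xi * t) / ((v1 - v2) * t)"
    using assms(7,8) by (simp add: p_ac_limit_def)
  show ?thesis
    using tendsto_tilde_p[OF less_imp_le[OF assms(1)] assms(2,4,5), where x = x and t = t]
    unfolding reset_part survival_part .
qed

end
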